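(* There exist a transient MDP (with a sink state) and a risk level $\alpha\in(0,1)$ such that the total reward criterion with nested CVaR or nested EVaR at level $\alpha$ is unbounded, i.e. the nested finite-horizon values $v_t(s)$ of some non-sink state $s$ satisfy $\lim_{t\to\infty}v_t(s)=-\infty$.
   Context: A transient MDP has finite states $\bar{\mathcal S}=\mathcal S\cup\{e\}$ with sink state $e$ ($p(e,a,e)=1$, $r(e,a)=0$) and finite actions, such that for every stationary deterministic policy $\pi$, $\sum_{t\ge0}\mathbb P^{\pi,s}[\tilde s_t=s']<\infty$ for all non-sink $s,s'$; rewards may be of any sign. For a risk measure $\psi$ (here $\psi=\mathrm{CVaR}_\alpha$ or $\mathrm{EVaR}_\alpha$, applied to rewards so that low values are bad) and a policy, the nested (Markov) risk value over horizon $t$ from state $s$ is $v_t(s)=\psi^s\big[r(\tilde s_0,\tilde a_0)+\psi\big[r(\tilde s_1,\tilde a_1)+\cdots+\psi[r(\tilde s_{t-1},\tilde a_{t-1})\mid\tilde s_{t-2}]\cdots\mid\tilde s_1\big]\big]$, where each inner $\psi[\cdot\mid\tilde s_k]$ is the risk measure applied to the conditional distribution of the next-step quantity given the current state. Here $\mathrm{CVaR}_\alpha[\tilde x]=\sup_{z\in\mathbb R}\{z-\alpha^{-1}\mathbb E[(z-\tilde x)_+]\}$ and $\mathrm{EVaR}_\alpha[\tilde x]=\sup_{\beta>0}\big(-\beta^{-1}\log\mathbb E e^{-\beta\tilde x}+\beta^{-1}\log\alpha\big)$. *)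

theory Defs
  imports "HOL-Probability.Probability"
begin

text \<open>Finite MDP encoded on natural numbers: state set S (containing the sink e),
  action set A, transition kernel P s a (a distribution on next states), reward R s a.\<close>

text \<open>Conditional value at risk of the random variable X under the distribution p
  (applied to rewards: low values are bad).\<close>
definition CVaR :: "real \<Rightarrow> 's pmf \<Rightarrow> ('s \<Rightarrow> real) \<Rightarrow> real" where
  "CVaR \<alpha> p X = (SUP z::real. z - measure_pmf.expectation p (\<lambda>x. max 0 (z - X x)) / \<alpha>)"

definition EVaR :: "real \<Rightarrow> 's pmf \<Rightarrow> ('s \<Rightarrow> real) \<Rightarrow> real" where
  "EVaR \<alpha> p X = (SUP \<beta>\<in>{0<..}.
      - ln (measure_pmf.expectation p (\<lambda>x. exp (- \<beta> * X x))) / \<beta> + ln \<alpha> / \<beta>)"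

fun state_dist :: "(nat \<Rightarrow> nat \<Rightarrow> nat pmf) \<Rightarrow> (nat \<Rightarrow> nat) \<Rightarrow> nat \<Rightarrow> nat \<Rightarrow> nat pmf" where
  "state_dist P \<pi> s 0 = return_pmf s"
| "state_dist P \<pi> s (Suc t) = bind_pmf (state_dist P \<pi> s t) (\<lambda>x. P x (\<pi> x))"

definition transient_mdp ::
  "nat set \<Rightarrow> nat set \<Rightarrow> nat \<Rightarrow> (nat \<Rightarrow> nat \<Rightarrow> nat pmf) \<Rightarrow> (nat \<Rightarrow> nat \<Rightarrow> real) \<Rightarrow> bool" where
  "transient_mdp S A e P R \<longleftrightarrow>
     finite S \<and> finite A \<and> A \<noteq> {} \<and> e \<in> S \<and>
     (\<forall>s\<in>S. \<forall>a\<in>A. set_pmf (P s a) \<subseteq> S) \<and>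
     (\<forall>a\<in>A. P e a = return_pmf e \<and> R e a = 0) \<and>
     (\<forall>\<pi>. (\<forall>s\<in>S. \<pi> s \<in> A) \<longrightarrow>
        (\<forall>s\<in>S - {e}. \<forall>s'\<in>S - {e}. summable (\<lambda>t. pmf (state_dist P \<pi> s t) s')))"

text \<open>Nested risk value: nv psi P R pi n k s is the value of the remaining n steps,
  started at time k in state s, under the Markov deterministic policy pi (time, state).\<close>
fun nv :: "(nat pmf \<Rightarrow> (nat \<Rightarrow> real) \<Rightarrow> real) \<Rightarrow> (nat \<Rightarrow> nat \<Rightarrow> nat pmf) \<Rightarrow>
    (nat \<Rightarrow> nat \<Rightarrow> real) \<Rightarrow> (nat \<Rightarrow> nat \<Rightarrow> nat) \<Rightarrow> nat \<Rightarrow> nat \<Rightarrow> nat \<Rightarrow> real" where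
  "nv \<psi> P R \<pi> 0 k s = 0"
| "nv \<psi> P R \<pi> (Suc n) k s =
     \<psi> (P s (\<pi> k s)) (\<lambda>s'. R s (\<pi> k s) + nv \<psi> P R \<pi> n (Suc k) s')"

definition nested_value ::
  "(nat pmf \<Rightarrow> (nat \<Rightarrow> real) \<Rightarrow> real) \<Rightarrow> (nat \<Rightarrow> nat \<Rightarrow> nat pmf) \<Rightarrow>
    (nat \<Rightarrow> nat \<Rightarrow> real) \<Rightarrow> (nat \<Rightarrow> nat \<Rightarrow> nat) \<Rightarrow> nat \<Rightarrow> nat \<Rightarrow> real" where
  "nested_value \<psi> P R \<pi> t s = nv \<psi> P R \<pi> t 0 s"

end

theory Submission
  imports Defs
begin

text \<open>A state that pays reward \<open>-1\<close> and returns to itself with probability \<open>1/2\<close>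
  (otherwise it falls into the sink) is transient, since it is occupied at time \<open>t\<close>
  with probability \<open>2\<^sup>-\<^sup>t\<close>. But CVaR and EVaR at level \<open>\<alpha>\<close> never exceed the value of
  the random variable at an outcome of probability at least \<open>\<alpha>\<close>; with \<open>\<alpha> = 1/2\<close>
  the nested risk measure therefore always evaluates as if the chain stayed in that
  state, and the horizon-\<open>t\<close> value is at most \<open>-t\<close>.\<close>

lemma pmf_mult_le_expectation:
  fixes f :: "'a \<Rightarrow> real"
  assumes "finite (set_pmf p)" and "\<And>y. 0 \<le> f y"
  shows "pmf p x * f x \<le> measure_pmf.expectation p f"
proof (cases "x \<in> set_pmf p")
  case True
  have "f x * pmf p x \<le> (\<Sum>y\<in>set_pmf p. f y * pmf p y)"
    by (rule member_le_sum[OF True]) (simp_all add: assms)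
  also have "\<dots> = measure_pmf.expectation p f"
    by (rule integral_measure_pmf_real[symmetric]) (simp_all add: assms(1))
  finally show ?thesis
    by (simp add: mult.commute)
next
  case False
  then show ?thesis
    by (simp add: set_pmf_eq assms(2))
qed

lemma CVaR_le_atom:
  assumes "finite (set_pmf p)" and "0 < \<alpha>" and "\<alpha> \<le> pmf p x"
  shows "CVaR \<alpha> p X \<le> X x"
  unfolding CVaR_def
proof (rule cSUP_least)
  fix z :: real
  let ?E = "measure_pmf.expectation p (\<lambda>y. max 0 (z - X y))"
  have "\<alpha> * (z - X x) \<le> \<alpha> * max 0 (z - X x)"
    using assms(2) by simp
  also have "\<dots> \<le> pmf p x * max 0 (z - X x)"
    using assms(3) by (intro mult_right_mono) auto
  also have "\<dots> \<le> ?E"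
    by (rule pmf_mult_le_expectation[OF assms(1)]) simp
  finally have "z - X x \<le> ?E / \<alpha>"
    using assms(2) by (simp add: pos_le_divide_eq mult.commute)
  then show "z - ?E / \<alpha> \<le> X x"
    by linarith
qed simp

lemma EVaR_le_atom:
  assumes "finite (set_pmf p)" and "0 < \<alpha>" and "\<alpha> \<le> pmf p x"
  shows "EVaR \<alpha> p X \<le> X x"
  unfolding EVaR_def
proof (rule cSUP_least)
  fix \<beta> :: real
  assume "\<beta> \<in> {0<..}"
  then have "0 < \<beta>" by simp
  let ?E = "measure_pmf.expectation p (\<lambda>y. exp (- \<beta> * X y))"
  have "\<alpha> * exp (- \<beta> * X x) \<le> pmf p x * exp (- \<beta> * X x)"
    using assms(3) by (intro mult_right_mono) auto
  also have "\<dots> \<le> ?E"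
    by (rule pmf_mult_le_expectation[OF assms(1)]) simp
  finally have "ln (\<alpha> * exp (- \<beta> * X x)) \<le> ln ?E"
    using assms(2) by (intro ln_mono) auto
  then have "ln \<alpha> - \<beta> * X x \<le> ln ?E"
    using assms(2) by (simp add: ln_mult)
  then show "- ln ?E / \<beta> + ln \<alpha> / \<beta> \<le> X x"
    using \<open>0 < \<beta>\<close> by (simp add: field_simps)
qed simp

definition leaky_kernel :: "nat \<Rightarrow> nat \<Rightarrow> nat pmf" where
  "leaky_kernel s a = (if s = 1 then pmf_of_set {0, 1} else return_pmf 0)"

definition leaky_reward :: "nat \<Rightarrow> nat \<Rightarrow> real" where
  "leaky_reward s a = (if s = 1 then -1 else 0)"

lemma pmf_leaky_kernel_1: "pmf (leaky_kernel s a) 1 = (if s = 1 then 1/2 else 0)"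
  by (simp add: leaky_kernel_def pmf_of_set)

lemma set_pmf_state_dist_leaky: "set_pmf (state_dist leaky_kernel \<pi> 1 t) \<subseteq> {0, 1}"
  by (induction t) (auto simp: leaky_kernel_def split: if_splits)

lemma pmf_state_dist_leaky: "pmf (state_dist leaky_kernel \<pi> 1 t) 1 = (1/2) ^ t"
proof (induction t)
  case 0
  then show ?case by simp
next
  case (Suc t)
  have "pmf (state_dist leaky_kernel \<pi> 1 (Suc t)) 1 =
      (\<Sum>s\<in>{0, 1}. pmf (leaky_kernel s (\<pi> s)) 1 * pmf (state_dist leaky_kernel \<pi> 1 t) s)"
    unfolding state_dist.simps pmf_bind
    by (rule integral_measure_pmf_real) (use set_pmf_state_dist_leaky in auto)
  also have "\<dots> = (1/2) ^ Suc t"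
    using Suc.IH by (simp add: pmf_leaky_kernel_1 del: One_nat_def)
  finally show ?case .
qed

lemma transient_mdp_leaky: "transient_mdp {0, 1} {0} 0 leaky_kernel leaky_reward"
  unfolding transient_mdp_def
proof (intro conjI ballI allI impI)
  fix \<pi> s s'
  assume "s \<in> {0::nat, 1} - {0}" and "s' \<in> {0::nat, 1} - {0}"
  then have "s = 1" and "s' = 1"
    by auto
  then show "summable (\<lambda>t. pmf (state_dist leaky_kernel \<pi> s t) s')"
    by (simp only: pmf_state_dist_leaky summable_geometric_iff) simp
qed (auto simp: leaky_kernel_def leaky_reward_def)

lemma nv_leaky_le:
  assumes "\<And>X. \<psi> (pmf_of_set {0, 1}) X \<le> X 1"
  shows "nv \<psi> leaky_kernel leaky_reward \<pi> n k 1 \<le> - real n"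
proof (induction n arbitrary: k)
  case 0
  then show ?case by simp
next
  case (Suc n)
  have "nv \<psi> leaky_kernel leaky_reward \<pi> (Suc n) k 1 =
      \<psi> (pmf_of_set {0, 1}) (\<lambda>s. -1 + nv \<psi> leaky_kernel leaky_reward \<pi> n (Suc k) s)"
    by (simp add: leaky_kernel_def leaky_reward_def)
  also have "\<dots> \<le> -1 + nv \<psi> leaky_kernel leaky_reward \<pi> n (Suc k) 1"
    by (rule assms)
  also have "\<dots> \<le> - real (Suc n)"
    using Suc[of "Suc k"] by simp
  finally show ?case .
qed

lemma nested_value_leaky_at_bot:
  assumes "\<And>X. \<psi> (pmf_of_set {0, 1}) X \<le> X 1"
  shows "filterlim (\<lambda>t. nested_value \<psi> leaky_kernel leaky_reward (\<pi> t) t 1) at_bot sequentially"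
  unfolding filterlim_uminus_at_bot
proof (rule filterlim_at_top_mono[OF filterlim_real_sequentially always_eventually], rule allI)
  fix t
  show "real t \<le> - nested_value \<psi> leaky_kernel leaky_reward (\<pi> t) t 1"
    using nv_leaky_le[of \<psi>, OF assms, of "\<pi> t" t 0] by (simp add: nested_value_def)
qed

theorem proposition4:
  shows "\<exists>S A e P R (\<alpha>::real).
     transient_mdp S A e P R \<and> 0 < \<alpha> \<and> \<alpha> < 1 \<and>
     (\<exists>s\<in>S - {e}. \<forall>\<pi> :: nat \<Rightarrow> nat \<Rightarrow> nat \<Rightarrow> nat.
        (\<forall>t k. \<forall>x\<in>S. \<pi> t k x \<in> A) \<longrightarrow>
          filterlim (\<lambda>t. nested_value (CVaR \<alpha>) P R (\<pi> t) t s) at_bot sequentially \<and>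
          filterlim (\<lambda>t. nested_value (EVaR \<alpha>) P R (\<pi> t) t s) at_bot sequentially)"
proof -
  have half: "pmf (pmf_of_set {0::nat, 1}) 1 = 1/2"
    by (simp add: pmf_of_set)
  have CVaR_half: "CVaR (1/2) (pmf_of_set {0::nat, 1}) X \<le> X 1" for X
    by (rule CVaR_le_atom) (simp_all add: half)
  have EVaR_half: "EVaR (1/2) (pmf_of_set {0::nat, 1}) X \<le> X 1" for X
    by (rule EVaR_le_atom) (simp_all add: half)
  have limits: "filterlim (\<lambda>t. nested_value (CVaR (1/2)) leaky_kernel leaky_reward (\<pi> t) t 1)
        at_bot sequentially \<and>
      filterlim (\<lambda>t. nested_value (EVaR (1/2)) leaky_kernel leaky_reward (\<pi> t) t 1)
        at_bot sequentially" for \<pi> :: "nat \<Rightarrow> nat \<Rightarrow> nat \<Rightarrow> nat"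
    using nested_value_leaky_at_bot[where \<psi> = "CVaR (1/2)", OF CVaR_half]
      nested_value_leaky_at_bot[where \<psi> = "EVaR (1/2)", OF EVaR_half] by blast
  show ?thesis
    by (rule exI[of _ "{0, 1}"], rule exI[of _ "{0}"], rule exI[of _ 0],
        rule exI[of _ leaky_kernel], rule exI[of _ leaky_reward], rule exI[of _ "1/2"])
      (use transient_mdp_leaky limits in auto)
qed

end
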